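(* Let $r\ge 3$ and $t\ge 1$ be integers, let $s=\lfloor (t-1)/2\rfloor$, and let $\mathcal{C}$ be an $(n,k,r,t)_{\mathrm{seq}}$ code over a finite field $\mathbb{F}_q$. Then $$\frac{k}{n}\le \frac{r^{s+1}}{r^{s+1}+2\sum_{i=0}^{s}r^i}\quad\text{if $t$ is even},\qquad \frac{k}{n}\le \frac{r^{s+1}}{r^{s+1}+2\sum_{i=1}^{s}r^i+1}\quad\text{if $t$ is odd}.$$
   Context: Sequential-recovery LRC: Let $\mathbb{F}_q$ be a finite field and $n,k,r,t$ positive integers. An $(n,k,r,t)_{\mathrm{seq}}$ code is an $[n,k]$ linear code $\mathcal{C}\subseteq\mathbb{F}_q^n$ (length $n$, dimension $k$) with the following property: for every set $E\subseteq[n]$ with $1\le |E|=u\le t$ there is an ordering $\ell_1,\dots,\ell_u$ of the elements of $E$ and, for each $j\in[u]$, a set $R_j\subseteq[n]$ with $|R_j|\le r$ and $R_j\cap\{\ell_j,\ell_{j+1},\dots,\ell_u\}=\emptyset$, together with coefficients $a_{j,i}\in\mathbb{F}_q$ ($i\in R_j$), such that $c_{\ell_j}=\sum_{i\in R_j}a_{j,i}c_i$ for every codeword $c=(c_1,\dots,c_n)\in\mathcal{C}$. *)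

theory Defs
  imports "HOL-Analysis.Analysis"
begin

definition seq_recoverable :: "('a::field ^ 'n) set \<Rightarrow> nat \<Rightarrow> nat \<Rightarrow> bool" where
  "seq_recoverable C r t \<longleftrightarrow>
     (\<forall>E::'n set. E \<noteq> {} \<and> card E \<le> t \<longrightarrow>
        (\<exists>l. distinct l \<and> set l = E \<and>
           (\<forall>j<length l. \<exists>(R::'n set) (a::'n \<Rightarrow> 'a).
              card R \<le> r \<and> R \<inter> set (drop j l) = {} \<and>
              (\<forall>c\<in>C. c $ (l ! j) = (\<Sum>i\<in>R. a i * c $ i)))))"

definition seq_LRC :: "('a::{field,finite} ^ 'n) set \<Rightarrow> nat \<Rightarrow> nat \<Rightarrow> nat \<Rightarrow> nat \<Rightarrow> bool" where
  "seq_LRC C n k r t \<longleftrightarrow>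
     vec.subspace C \<and> CARD('n) = n \<and> vec.dim C = k \<and> seq_recoverable C r t"

end

theory Submission
  imports Defs
begin

text \<open>Take a maximal linearly independent set \<open>H\<close> of dual codewords of weight at most \<open>r + 1\<close>.
  Then \<open>k \<le> n - |H|\<close>, and sequential recovery says that for every set \<open>E\<close> of at most \<open>t\<close>
  coordinates some combination of the rows of \<open>H\<close> is nonzero at exactly one coordinate of \<open>E\<close>.

  Regard the coordinates lying in the support of exactly two rows as the edges of a graph on \<open>H\<close>,
  and call a row anchored if some coordinate lies in its support alone. The rows within distance
  \<open>s\<close> of an anchored row carry a breadth-first forest. Any other edge between rows of depths
  \<open>a\<close> and \<open>b\<close> satisfies \<open>a + b + 3 > t\<close>: otherwise the two root paths together with the
  edge form at most \<open>t\<close> coordinates on which no combination is isolated, because zeros of a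
  combination propagate along the paths.

  Finally every coordinate distributes a unit weight among the rows of its support, a tree edge
  between depths \<open>i\<close> and \<open>i + 1\<close> in the ratio \<open>\<alpha>\<^sub>i\<^sub>+\<^sub>1 : \<beta>\<^sub>i\<^sub>+\<^sub>1\<close> in favour of the parent. The
  weights are tuned so that every row receives at most \<open>V = 1 + r\<^sup>s\<^sup>+\<^sup>1 / D\<close>, where
  \<open>D = 2 (1 + r + \<dots> + r\<^sup>s)\<close>, minus one if \<open>t\<close> is odd. Hence \<open>n \<le> |H| V\<close> and
  \<open>k / n \<le> 1 - 1 / V\<close>, which is the bound.\<close>

section \<open>Annihilators\<close>

definition dot :: "'a::field ^ 'n \<Rightarrow> 'a ^ 'n \<Rightarrow> 'a" where
  "dot g x = (\<Sum>j\<in>UNIV. g $ j * x $ j)"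

lemma dot_diff_scale_right: "dot g (x - c *s y) = dot g x - c * dot g y"
  by (simp add: dot_def algebra_simps sum_subtractf sum_distrib_left)
lemma dot_diff_scale_left: "dot (h - c *s g) y = dot h y - c * dot g y"
  by (simp add: dot_def algebra_simps sum_subtractf sum_distrib_left)
lemma dot_scale_right: "dot g (c *s y) = c * dot g y"
  by (simp add: dot_def algebra_simps sum_distrib_left)
lemma dot_axis_right: "dot h (axis j 1) = h $ j"
  by (simp add: dot_def axis_def if_distrib cong: if_cong)

lemma dot_commute: "dot g x = dot x g"
  by (simp add: dot_def mult.commute)

lemma dot_axis_left: "dot (axis j 1) h = h $ j"
  using dot_axis_right by (simp add: dot_commute)

lemma dot_eq_0_span:
  assumes "\<forall>g\<in>S. dot g x = 0" "g \<in> vec.span S"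
  shows "dot g x = 0"
proof -
  have "vec.subspace {g. dot g x = 0}"
    unfolding vec.subspace_def
    by (simp add: dot_def algebra_simps sum.distrib flip: sum_distrib_left)
  then show ?thesis using vec.span_minimal[of S "{g. dot g x = 0}"] assms by auto
qed

lemma exists_dot_separating:
  fixes S :: "('a::field ^ 'n) set"
  assumes "finite S" "h \<notin> vec.span S"
  shows "\<exists>x. (\<forall>g\<in>S. dot g x = 0) \<and> dot h x \<noteq> 0"
  using assms
proof (induction S arbitrary: h rule: finite_induct)
  case empty
  then have "h \<noteq> 0" by (simp add: vec.span_empty)
  then obtain j where "h $ j \<noteq> 0" by (metis vec_eq_iff zero_index)
  then show ?case by (intro exI[of _ "axis j 1"]) (simp add: dot_axis_right)
next
  case (insert g S)
  have hS: "h \<notin> vec.span S" using insert.prems vec.span_mono[of S "insert g S"] by auto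
  show ?case
  proof (cases "g \<in> vec.span S")
    case True
    obtain x where x: "\<forall>g\<in>S. dot g x = 0" "dot h x \<noteq> 0" using insert.IH[OF hS] by blast
    have "dot g x = 0" using dot_eq_0_span[OF x(1) True] .
    then show ?thesis using x by auto
  next
    case False
    obtain xg where xg: "\<forall>g\<in>S. dot g xg = 0" "dot g xg \<noteq> 0" using insert.IH[OF False] by blast
    define x1 where "x1 = (1 / dot g xg) *s xg"
    have x1: "\<forall>g\<in>S. dot g x1 = 0" "dot g x1 = 1"
      using xg by (auto simp: x1_def dot_scale_right)
    define c where "c = dot h x1"
    have "h - c *s g \<notin> vec.span S"
    proof
      assume "h - c *s g \<in> vec.span S"
      then have "h - c *s g \<in> vec.span (insert g S)" using vec.span_mono[of S "insert g S"] by auto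
      moreover have "c *s g \<in> vec.span (insert g S)" by (simp add: vec.span_base vec.span_scale)
      ultimately have "(h - c *s g) + c *s g \<in> vec.span (insert g S)" by (rule vec.span_add)
      then show False using insert.prems by simp
    qed
    then obtain y where y: "\<forall>g\<in>S. dot g y = 0" "dot (h - c *s g) y \<noteq> 0" using insert.IH by blast
    define x where "x = y - dot g y *s x1"
    have "\<forall>g'\<in>insert g S. dot g' x = 0"
      using x1 y(1) by (auto simp: x_def dot_diff_scale_right)
    moreover have "dot h x \<noteq> 0"
      using y(2) by (simp add: x_def dot_diff_scale_right dot_diff_scale_left c_def algebra_simps)
    ultimately show ?thesis by blast
  qed
qed

definition annihilator :: "('a::field ^ 'n) set \<Rightarrow> ('a ^ 'n) set" where
  "annihilator S = {x. \<forall>g\<in>S. dot g x = 0}"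

lemma subspace_annihilator: "vec.subspace (annihilator S)"
  unfolding vec.subspace_def annihilator_def
  by (simp add: dot_def algebra_simps sum.distrib flip: sum_distrib_left)

lemma dim_annihilator_add_card_le:
  fixes S :: "('a::field ^ 'n) set"
  assumes "vec.independent S"
  shows "vec.dim (annihilator S) + card S \<le> CARD('n)"
proof -
  have fin: "finite S" using assms vec.finiteI_independent by blast
  show ?thesis using fin assms
  proof (induction S rule: finite_induct)
    case empty
    have "annihilator ({}::('a ^ 'n) set) = UNIV" by (simp add: annihilator_def)
    then show ?case by (metis vec_dim_card le_refl add_0_right card.empty)
  next
    case (insert g S)
    have indS: "vec.independent S" and gS: "g \<notin> vec.span S"
      using insert.prems insert.hyps by (auto simp: vec.independent_insert)
    obtain x where x: "\<forall>g\<in>S. dot g x = 0" "dot g x \<noteq> 0" using exists_dot_separating[OF insert.hyps(1) gS] by blast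
    have "annihilator (insert g S) \<subset> annihilator S" using x by (auto simp: annihilator_def)
    then have "vec.dim (annihilator (insert g S)) < vec.dim (annihilator S)"
      using vec.dim_psubset[of "annihilator (insert g S)" "annihilator S"]
      by (metis subspace_annihilator vec.span_eq_iff)
    then show ?case using insert.IH[OF indS] insert.hyps by simp
  qed
qed

lemma sum_le_card_mult:
  fixes f :: "'a \<Rightarrow> real"
  assumes "finite R" "card R \<le> c" "\<forall>j\<in>R. f j \<le> M" "0 \<le> M"
  shows "sum f R \<le> real c * M"
proof -
  have "sum f R \<le> real (card R) * M" using assms(3) sum_bounded_above by fastforce
  also have "\<dots> \<le> real c * M" using assms by (intro mult_right_mono) auto
  finally show ?thesis .
qed

lemma sum_le_one_plus_card_mult:
  fixes f :: "'a \<Rightarrow> real"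
  assumes "finite R" "j0 \<in> R" "card R \<le> c + 1" "f j0 \<le> B" "\<forall>j\<in>R - {j0}. f j \<le> M" "0 \<le> M"
  shows "sum f R \<le> B + real c * M"
proof -
  have "sum f R = f j0 + sum f (R - {j0})" using assms by (simp add: sum.remove)
  moreover have "sum f (R - {j0}) \<le> real c * M"
    using assms by (intro sum_le_card_mult) (auto simp: card_Diff_singleton)
  ultimately show ?thesis using assms(4) by simp
qed

lemma rate_le_of_cover:
  fixes n m k X D :: real
  assumes "0 < D" "0 \<le> X" "0 < n" "n \<le> m * (1 + X / D)" "k + m \<le> n"
  shows "k / n \<le> X / (X + D)"
proof -
  have "n * D \<le> m * (D + X)" using assms(1,4) by (simp add: field_simps)
  then have "k * (X + D) \<le> n * X"
    using assms(1,2,5) mult_right_mono[of k "n - m" "X + D"] by (simp add: algebra_simps)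
  then show ?thesis using assms(1-3) by (simp add: divide_le_eq le_divide_eq mult.commute)
qed

section \<open>Isolating systems of checks\<close>

locale isolating_checks =
  fixes H :: "'r set" and A :: "'r \<Rightarrow> 'c::finite \<Rightarrow> 'a::field" and r t s :: nat
  assumes finite_rows: "finite H"
  and row_weight: "h \<in> H \<Longrightarrow> card {j. A h j \<noteq> 0} \<le> r + 1"
  and isolates: "E \<noteq> {} \<Longrightarrow> card E \<le> t \<Longrightarrow> \<exists>\<mu>. card {j\<in>E. (\<Sum>h\<in>H. \<mu> h * A h j) \<noteq> 0} = 1"
  and r_ge_3: "r \<ge> 3" and t_ge_1: "t \<ge> 1" and t_lower: "2 * s + 1 \<le> t" and t_upper: "t \<le> 2 * s + 2"
begin

definition row_comb :: "('r \<Rightarrow> 'a) \<Rightarrow> 'c \<Rightarrow> 'a" where "row_comb \<mu> j = (\<Sum>h\<in>H. \<mu> h * A h j)"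
definition col_support :: "'c \<Rightarrow> 'r set" where "col_support j = {h\<in>H. A h j \<noteq> 0}"
definition edge :: "'c \<Rightarrow> 'r \<Rightarrow> 'r \<Rightarrow> bool" where "edge j x y \<longleftrightarrow> col_support j = {x,y} \<and> x \<noteq> y"
definition anchored :: "'r set" where "anchored = {h. \<exists>j. col_support j = {h}}"

lemma exists_isolating_comb:
  assumes "E \<noteq> {}" "card E \<le> t"
  shows "\<exists>\<mu> e. e \<in> E \<and> row_comb \<mu> e \<noteq> 0 \<and> (\<forall>j\<in>E - {e}. row_comb \<mu> j = 0)"
proof -
  from isolates[OF assms] obtain \<mu> where "card {j\<in>E. row_comb \<mu> j \<noteq> 0} = 1" by (auto simp: row_comb_def)
  then obtain e where "{j\<in>E. row_comb \<mu> j \<noteq> 0} = {e}" by (auto simp: card_1_singleton_iff)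
  then show ?thesis by (intro exI[of _ \<mu>] exI[of _ e]) blast
qed

lemma finite_col_support: "finite (col_support j)" using finite_rows by (auto simp: col_support_def)

lemma row_comb_col_support: "row_comb \<mu> j = (\<Sum>h\<in>col_support j. \<mu> h * A h j)"
  unfolding row_comb_def col_support_def using finite_rows by (intro sum.mono_neutral_right) auto

lemma row_comb_eq_0: "(\<forall>h\<in>col_support j. \<mu> h = 0) \<Longrightarrow> row_comb \<mu> j = 0"
  by (simp add: row_comb_col_support)

lemma row_comb_single: "col_support j = {x} \<Longrightarrow> row_comb \<mu> j = 0 \<longleftrightarrow> \<mu> x = 0"
  by (simp add: row_comb_col_support) (metis (mono_tags, lifting) col_support_def insertI1 mem_Collect_eq)

lemma edge_sym: "edge j x y \<Longrightarrow> edge j y x" by (auto simp: edge_def)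

lemma row_comb_edge:
  assumes e: "edge j x y" and w: "row_comb \<mu> j = 0"
  shows "\<mu> x = 0 \<longleftrightarrow> \<mu> y = 0"
proof -
  have ne: "A x j \<noteq> 0" "A y j \<noteq> 0" using e by (auto simp: edge_def col_support_def)
  have "row_comb \<mu> j = \<mu> x * A x j + \<mu> y * A y j" using e by (simp add: row_comb_col_support edge_def)
  then show ?thesis using w ne by auto
qed

lemma row_comb_diff: "row_comb (\<lambda>h. \<mu>1 h - c * \<mu>2 h) j = row_comb \<mu>1 j - c * row_comb \<mu>2 j"
  by (simp add: row_comb_def algebra_simps sum_subtractf sum_distrib_left)

lemma edge_not_single: "edge j x y \<Longrightarrow> col_support j \<noteq> {z}" by (auto simp: edge_def)

subsection \<open>The breadth-first forest of shallow rows\<close>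

fun reach :: "nat \<Rightarrow> 'r \<Rightarrow> bool" where
  "reach 0 x = (x \<in> anchored)"
| "reach (Suc d) x = (reach d x \<or> (\<exists>y j. reach d y \<and> edge j x y))"

definition depth :: "'r \<Rightarrow> nat" where "depth x = (LEAST d. reach d x)"
definition shallow :: "'r \<Rightarrow> bool" where "shallow x = reach s x"
definition parent :: "'r \<Rightarrow> 'r" where
  "parent x = (SOME y. \<exists>j. reach (depth x - 1) y \<and> depth y = depth x - 1 \<and> edge j x y)"
definition parent_edge :: "'r \<Rightarrow> 'c" where "parent_edge x = (SOME j. edge j x (parent x))"
definition anchor :: "'r \<Rightarrow> 'c" where "anchor x = (SOME j. col_support j = {x})"

fun ancestor :: "nat \<Rightarrow> 'r \<Rightarrow> 'r" where
  "ancestor 0 x = x"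
| "ancestor (Suc i) x = ancestor i (parent x)"

definition path_cols :: "nat \<Rightarrow> 'r \<Rightarrow> 'c set" where "path_cols i x = (\<lambda>q. parent_edge (ancestor q x)) ` {..<i}"
definition root :: "'r \<Rightarrow> 'r" where "root x = ancestor (depth x) x"
definition root_cols :: "'r \<Rightarrow> 'c set" where "root_cols x = insert (anchor (root x)) (path_cols (depth x) x)"

lemma reach_mono: assumes "reach d x" "d \<le> d'" shows "reach d' x"
  using assms(2,1) by (induction d' rule: dec_induct) auto

lemma reach_depth: "reach d x \<Longrightarrow> reach (depth x) x \<and> depth x \<le> d"
  unfolding depth_def by (metis LeastI Least_le)

lemma reach_edge: "edge j x y \<Longrightarrow> reach d y \<Longrightarrow> reach (Suc d) x" by auto

lemma depth_edge_le: "edge j x y \<Longrightarrow> reach d y \<Longrightarrow> depth x \<le> Suc (depth y)"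
  by (metis reach_depth reach_edge)

lemma anchored_depth: assumes "x \<in> anchored" shows "reach 0 x \<and> depth x = 0"
proof -
  have "reach 0 x" using assms by simp
  then show ?thesis using reach_depth[of 0 x] by simp
qed

lemma depth_0_anchored: assumes "reach d x" "depth x = 0" shows "x \<in> anchored"
proof -
  have "reach (depth x) x" using reach_depth[OF assms(1)] by blast
  then show ?thesis using assms(2) by simp
qed

lemma col_support_anchor: assumes "x \<in> anchored" shows "col_support (anchor x) = {x}"
proof -
  have "\<exists>j. col_support j = {x}" using assms by (simp add: anchored_def)
  then show ?thesis unfolding anchor_def by (rule someI_ex)
qed

lemma depth_Suc_neighbour:
  assumes "reach d x" "depth x = Suc i"
  shows "\<exists>y j. reach i y \<and> depth y = i \<and> edge j x y"
proof -
  have r: "reach (Suc i) x" using assms reach_depth by metis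
  have nr: "\<not> reach i x" using \<open>depth x = Suc i\<close> reach_depth by fastforce
  then obtain y j where y: "reach i y" "edge j x y" using r by auto
  have "depth y \<le> i" using y reach_depth by blast
  moreover have "\<not> depth y < i"
  proof
    assume "depth y < i"
    then have "reach (Suc (depth y)) x" using y reach_depth reach_edge by blast
    then show False using nr reach_mono \<open>depth y < i\<close> by (metis Suc_leI)
  qed
  ultimately show ?thesis using y by (intro exI[of _ y] exI[of _ j]) auto
qed

lemma parent_props:
  assumes a: "shallow x" "1 \<le> depth x"
  shows "shallow (parent x) \<and> depth (parent x) = depth x - 1 \<and> edge (parent_edge x) x (parent x)"
proof -
  have ls: "depth x \<le> s" using a reach_depth shallow_def by blast
  obtain i where i: "depth x = Suc i" using a by (cases "depth x") auto
  have ex: "\<exists>y j. reach (depth x - 1) y \<and> depth y = depth x - 1 \<and> edge j x y"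
    using depth_Suc_neighbour[OF _ i] a i shallow_def by auto
  then have p: "\<exists>j. reach (depth x - 1) (parent x) \<and> depth (parent x) = depth x - 1 \<and> edge j x (parent x)"
    unfolding parent_def by (rule someI_ex)
  then have "edge (parent_edge x) x (parent x)" unfolding parent_edge_def by (metis someI_ex)
  moreover have "shallow (parent x)" using p ls reach_mono shallow_def by (metis diff_le_self le_trans)
  ultimately show ?thesis using p by blast
qed

lemma ancestor_props: "shallow x \<Longrightarrow> i \<le> depth x \<Longrightarrow> shallow (ancestor i x) \<and> depth (ancestor i x) = depth x - i"
proof (induction i arbitrary: x)
  case 0 then show ?case by simp
next
  case (Suc i)
  then have "shallow (parent x)" "depth (parent x) = depth x - 1" using parent_props by auto
  then show ?case using Suc.IH[of "parent x"] Suc.prems by auto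
qed

lemma ancestor_add: "ancestor (i + j) x = ancestor j (ancestor i x)"
  by (induction i arbitrary: x) auto

lemma path_cols_add: "path_cols (i + j) x = path_cols i x \<union> path_cols j (ancestor i x)"
proof -
  have e: "{..<i+j} = {..<i} \<union> (\<lambda>q. i + q) ` {..<j}"
  proof (rule set_eqI)
    fix q
    show "q \<in> {..<i+j} \<longleftrightarrow> q \<in> {..<i} \<union> (\<lambda>q. i + q) ` {..<j}"
    proof
      assume "q \<in> {..<i+j}"
      then show "q \<in> {..<i} \<union> (\<lambda>q. i + q) ` {..<j}"
        by (cases "q < i") (auto intro!: image_eqI[of q _ "q - i"])
    qed auto
  qed
  have "path_cols (i + j) x = (\<lambda>q. parent_edge (ancestor q x)) ` {..<i} \<union> (\<lambda>q. parent_edge (ancestor q x)) ` ((\<lambda>q. i + q) ` {..<j})"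
    unfolding path_cols_def e image_Un ..
  also have "(\<lambda>q. parent_edge (ancestor q x)) ` ((\<lambda>q. i + q) ` {..<j}) = path_cols j (ancestor i x)"
    unfolding path_cols_def image_image ancestor_add ..
  finally show ?thesis unfolding path_cols_def .
qed

lemma path_cols_Suc: "path_cols (Suc i) x = insert (parent_edge x) (path_cols i (parent x))"
  using path_cols_add[of 1 i x] by (simp add: path_cols_def lessThan_Suc)

lemma finite_path_cols: "finite (path_cols i x)" by (simp add: path_cols_def)
lemma card_path_cols: "card (path_cols i x) \<le> i"
  unfolding path_cols_def using card_image_le[of "{..<i}"] by auto

lemma parent_edge_inj:
  assumes a: "shallow u" "shallow v" "1 \<le> depth u" "1 \<le> depth v" "parent_edge u = parent_edge v"
  shows "u = v"
proof -
  have "edge (parent_edge u) u (parent u)" "edge (parent_edge v) v (parent v)" using parent_props a by blast+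
  then have "col_support (parent_edge u) = {u, parent u}" "col_support (parent_edge v) = {v, parent v}" by (simp_all add: edge_def)
  moreover have "depth (parent u) = depth u - 1" "depth (parent v) = depth v - 1" using parent_props a by auto
  ultimately have c: "{u, parent u} = {v, parent v}" "depth (parent u) = depth u - 1" "depth (parent v) = depth v - 1"
    using a(5) by auto
  show "u = v"
  proof (rule ccontr)
    assume "u \<noteq> v"
    then have "u = parent v" "v = parent u" using c(1) by (auto simp: doubleton_eq_iff)
    then show False using c a(3,4) by simp
  qed
qed

lemma path_colsE:
  assumes a: "shallow x" "i \<le> depth x" "j \<in> path_cols i x"
  shows "\<exists>q<i. j = parent_edge (ancestor q x) \<and> shallow (ancestor q x) \<and> depth (ancestor q x) = depth x - q \<and> 1 \<le> depth (ancestor q x) \<and> edge j (ancestor q x) (parent (ancestor q x))"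
proof -
  obtain q where q: "q < i" "j = parent_edge (ancestor q x)" using a by (auto simp: path_cols_def)
  have "shallow (ancestor q x) \<and> depth (ancestor q x) = depth x - q" using ancestor_props a q by auto
  moreover then have "1 \<le> depth (ancestor q x)" using q a by auto
  ultimately show ?thesis using q parent_props by blast
qed

lemma path_col_not_single: "shallow x \<Longrightarrow> i \<le> depth x \<Longrightarrow> j \<in> path_cols i x \<Longrightarrow> col_support j \<noteq> {z}"
  using path_colsE edge_not_single by blast

lemma root_props: "shallow x \<Longrightarrow> root x \<in> anchored \<and> shallow (root x)"
  using ancestor_props[of x "depth x"] depth_0_anchored unfolding root_def shallow_def by auto

lemma anchor_notin_path_cols: "shallow x \<Longrightarrow> i \<le> depth x \<Longrightarrow> anchor (root x) \<notin> path_cols i x"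
  using path_col_not_single root_props col_support_anchor by metis

lemma card_root_cols: "card (root_cols x) \<le> depth x + 1"
proof -
  have "card (root_cols x) \<le> Suc (card (path_cols (depth x) x))" unfolding root_cols_def by (simp add: card_insert_if finite_path_cols)
  then show ?thesis using card_path_cols[of "depth x" x] by simp
qed

subsection \<open>Non-tree edges are long\<close>

lemma vanish_up_path: "shallow x \<Longrightarrow> d \<le> depth x \<Longrightarrow> \<mu> (ancestor d x) = 0 \<Longrightarrow> (\<forall>j\<in>path_cols d x. row_comb \<mu> j = 0) \<Longrightarrow> \<mu> x = 0"
proof (induction d arbitrary: x)
  case 0 then show ?case by simp
next
  case (Suc d)
  have p: "shallow (parent x)" "depth (parent x) = depth x - 1" "edge (parent_edge x) x (parent x)" using parent_props Suc.prems by auto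
  have "\<mu> (parent x) = 0" using Suc.IH[OF p(1)] Suc.prems p(2) by (simp add: path_cols_Suc)
  moreover have "row_comb \<mu> (parent_edge x) = 0" using Suc.prems by (simp add: path_cols_Suc)
  ultimately show ?case using row_comb_edge[OF p(3)] by simp
qed

lemma vanish_down_path: "shallow x \<Longrightarrow> d \<le> depth x \<Longrightarrow> \<mu> x = 0 \<Longrightarrow> (\<forall>j\<in>path_cols d x. row_comb \<mu> j = 0) \<Longrightarrow> \<mu> (ancestor d x) = 0"
proof (induction d arbitrary: x)
  case 0 then show ?case by simp
next
  case (Suc d)
  have p: "shallow (parent x)" "depth (parent x) = depth x - 1" "edge (parent_edge x) x (parent x)" using parent_props Suc.prems by auto
  have "row_comb \<mu> (parent_edge x) = 0" using Suc.prems by (simp add: path_cols_Suc)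
  then have "\<mu> (parent x) = 0" using row_comb_edge[OF p(3)] Suc.prems by simp
  then show ?case using Suc.IH[OF p(1)] Suc.prems p(2) by (simp add: path_cols_Suc)
qed

lemma parent_edge_notin_path_cols: "shallow x \<Longrightarrow> 1 \<le> depth x \<Longrightarrow> d \<le> depth x - 1 \<Longrightarrow> parent_edge x \<notin> path_cols d (parent x)"
proof
  assume a: "shallow x" "1 \<le> depth x" "d \<le> depth x - 1" "parent_edge x \<in> path_cols d (parent x)"
  have p: "shallow (parent x)" "depth (parent x) = depth x - 1" using parent_props a by auto
  obtain q where q: "q < d" "parent_edge x = parent_edge (ancestor q (parent x))" "shallow (ancestor q (parent x))"
      "depth (ancestor q (parent x)) = depth (parent x) - q" "1 \<le> depth (ancestor q (parent x))"
    using path_colsE[OF p(1) _ a(4)] a(3) p(2) by auto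
  have "x = ancestor q (parent x)" using parent_edge_inj[OF a(1) q(3) a(2) q(5) q(2)] .
  then have "depth x = depth x - 1 - q" using q(4) p(2) by simp
  then show False using a(2) by simp
qed

lemma path_col_forced: "shallow x \<Longrightarrow> d \<le> depth x \<Longrightarrow> \<mu> x = 0 \<Longrightarrow> \<mu> (ancestor d x) = 0 \<Longrightarrow> e \<in> path_cols d x \<Longrightarrow>
   (\<forall>j\<in>path_cols d x - {e}. row_comb \<mu> j = 0) \<Longrightarrow> row_comb \<mu> e = 0"
proof (induction d arbitrary: x)
  case 0 then show ?case by (simp add: path_cols_def)
next
  case (Suc d)
  have p: "shallow (parent x)" "depth (parent x) = depth x - 1" "edge (parent_edge x) x (parent x)" using parent_props Suc.prems by auto
  show ?case
  proof (cases "e = parent_edge x")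
    case True
    have ni: "parent_edge x \<notin> path_cols d (parent x)" using parent_edge_notin_path_cols Suc.prems by auto
    have "\<mu> (parent x) = 0"
      using vanish_up_path[OF p(1), of d \<mu>] Suc.prems p(2) ni True by (auto simp: path_cols_Suc)
    then show ?thesis using True p(3) Suc.prems(3) by (intro row_comb_eq_0) (auto simp: edge_def)
  next
    case False
    then have "row_comb \<mu> (parent_edge x) = 0" using Suc.prems by (simp add: path_cols_Suc)
    then have "\<mu> (parent x) = 0" using row_comb_edge[OF p(3)] Suc.prems by simp
    then show ?thesis using Suc.IH[OF p(1)] Suc.prems p(2) False by (auto simp: path_cols_Suc)
  qed
qed

lemma vanish_of_root_cols:
  assumes a: "shallow x" "\<forall>j\<in>root_cols x. row_comb \<mu> j = 0"
  shows "\<mu> x = 0"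
proof -
  have "col_support (anchor (root x)) = {root x}" using root_props a col_support_anchor by blast
  then have "\<mu> (root x) = 0" using a row_comb_single by (auto simp: root_cols_def)
  then show ?thesis using vanish_up_path[OF a(1), of "depth x" \<mu>] a by (auto simp: root_cols_def root_def)
qed

lemma root_col_forced:
  assumes a: "shallow x" "\<mu> x = 0" "e \<in> root_cols x" "\<forall>j\<in>root_cols x - {e}. row_comb \<mu> j = 0"
  shows "row_comb \<mu> e = 0"
proof -
  have c: "col_support (anchor (root x)) = {root x}" using root_props a col_support_anchor by blast
  have ni: "anchor (root x) \<notin> path_cols (depth x) x" using anchor_notin_path_cols a by simp
  show ?thesis
  proof (cases "e = anchor (root x)")
    case True
    have "\<mu> (root x) = 0" using vanish_down_path[OF a(1), of "depth x" \<mu>] a ni True by (auto simp: root_cols_def root_def)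
    then show ?thesis using True c row_comb_single by simp
  next
    case False
    then have "row_comb \<mu> (anchor (root x)) = 0" using a(4) by (auto simp: root_cols_def)
    then have "\<mu> (root x) = 0" using row_comb_single[OF c] by simp
    then show ?thesis using path_col_forced[OF a(1), of "depth x" \<mu> e] a False by (auto simp: root_cols_def root_def)
  qed
qed

lemma edge_notin_root_cols:
  assumes "shallow x" "edge b x y" "1 \<le> depth x \<Longrightarrow> b \<noteq> parent_edge x" "1 \<le> depth y \<Longrightarrow> b \<noteq> parent_edge y"
  shows "b \<notin> root_cols x"
proof
  assume "b \<in> root_cols x"
  then consider "b = anchor (root x)" | "b \<in> path_cols (depth x) x" by (auto simp: root_cols_def)
  then show False
  proof cases
    case 1
    then show False using root_props col_support_anchor assms edge_not_single by metis
  next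
    case 2
    then obtain q where q: "b = parent_edge (ancestor q x)" "1 \<le> depth (ancestor q x)" "edge b (ancestor q x) (parent (ancestor q x))"
      using path_colsE[OF assms(1) _ 2] by auto
    then have "ancestor q x \<in> {x, y}" using assms(2) by (auto simp: edge_def)
    then show False using q assms by auto
  qed
qed

lemma no_isolation_one_side:
  assumes "shallow x" "shallow y" "edge b x y" "b \<notin> root_cols x" "e0 \<in> root_cols x" "e0 \<notin> root_cols y" "row_comb \<mu> e0 \<noteq> 0"
    "\<forall>j\<in>(root_cols x \<union> root_cols y \<union> {b}) - {e0}. row_comb \<mu> j = 0"
  shows False
proof -
  have "\<mu> y = 0" using vanish_of_root_cols[OF assms(2)] assms(6,8) by auto
  moreover have "b \<noteq> e0" using assms(4,5) by auto
  then have "row_comb \<mu> b = 0" using assms(8) by auto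
  ultimately have "\<mu> x = 0" using row_comb_edge[OF assms(3)] by simp
  then have "row_comb \<mu> e0 = 0" using root_col_forced[OF assms(1) _ assms(5)] assms(8) by auto
  with assms(7) show False by simp
qed

lemma no_isolation_cycle_side:
  assumes "shallow x" "shallow y" "edge b x y" "i \<le> depth x" "i' \<le> depth y" "ancestor i x = z" "ancestor i' y = z"
    "\<nu> z = 0" "e1 \<in> path_cols i x" "row_comb \<nu> e1 \<noteq> 0" "\<forall>j\<in>path_cols i x - {e1}. row_comb \<nu> j = 0"
    "\<forall>j\<in>path_cols i' y. row_comb \<nu> j = 0" "row_comb \<nu> b = 0"
  shows False
proof -
  have "\<nu> y = 0" using vanish_up_path[OF assms(2,5)] assms by auto
  then have "\<nu> x = 0" using row_comb_edge[OF assms(3) assms(13)] by simp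
  then have "row_comb \<nu> e1 = 0" using path_col_forced[OF assms(1,4)] assms by auto
  with assms(10) show False by simp
qed

lemma no_isolation_cycle:
  assumes "shallow x" "shallow y" "edge b x y" "i \<le> depth x" "i' \<le> depth y" "ancestor i x = z" "ancestor i' y = z"
   "path_cols i x \<inter> path_cols i' y = {}" "b \<notin> path_cols i x" "b \<notin> path_cols i' y" "\<nu> z = 0"
   "e1 \<in> path_cols i x \<union> path_cols i' y \<union> {b}" "row_comb \<nu> e1 \<noteq> 0" "\<forall>j\<in>(path_cols i x \<union> path_cols i' y \<union> {b}) - {e1}. row_comb \<nu> j = 0"
  shows False
proof -
  consider "e1 = b" | "e1 \<in> path_cols i x" | "e1 \<in> path_cols i' y" using assms(12) by auto
  then show False
  proof cases
    case 1
    have "\<nu> x = 0" using vanish_up_path[OF assms(1,4)] assms 1 by auto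
    moreover have "\<nu> y = 0" using vanish_up_path[OF assms(2,5)] assms 1 by auto
    ultimately have "row_comb \<nu> b = 0" using assms(3) by (intro row_comb_eq_0) (auto simp: edge_def)
    then show False using 1 assms(13) by simp
  next
    case 2
    show False
      by (rule no_isolation_cycle_side[OF assms(1-7,11) 2 assms(13)]) (use assms 2 in auto)
  next
    case 3
    show False
      by (rule no_isolation_cycle_side[OF assms(2,1) edge_sym[OF assms(3)] assms(5,4,7,6,11) 3 assms(13)]) (use assms 3 in auto)
  qed
qed

lemma common_path_col_ancestor:
  assumes "shallow x" "shallow y" "a \<le> depth x" "c \<le> depth y" "j \<in> path_cols a x" "j \<in> path_cols c y"
  shows "\<exists>p<a. \<exists>q<c. ancestor p x = ancestor q y"
proof -
  obtain p where p: "p < a" "j = parent_edge (ancestor p x)" "shallow (ancestor p x)" "1 \<le> depth (ancestor p x)"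
    using path_colsE[OF assms(1,3,5)] by blast
  obtain q where q: "q < c" "j = parent_edge (ancestor q y)" "shallow (ancestor q y)" "1 \<le> depth (ancestor q y)"
    using path_colsE[OF assms(2,4,6)] by blast
  have "ancestor p x = ancestor q y" using parent_edge_inj[OF p(3) q(3) p(4) q(4)] p(2) q(2) by simp
  then show ?thesis using p q by blast
qed

lemma root_cols_split:
  assumes "shallow x" "i \<le> depth x"
  shows "root_cols x = path_cols i x \<union> root_cols (ancestor i x)"
proof -
  have l: "depth (ancestor i x) = depth x - i" using ancestor_props assms by auto
  have "root (ancestor i x) = root x"
    unfolding root_def l using ancestor_add[of i "depth x - i" x] assms by simp
  moreover have "path_cols (depth x) x = path_cols i x \<union> path_cols (depth (ancestor i x)) (ancestor i x)"
    unfolding l using path_cols_add[of i "depth x - i" x] assms by simp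
  ultimately show ?thesis unfolding root_cols_def by auto
qed

lemma root_col_in_path_cols:
  assumes "shallow x" "shallow y" "j \<in> root_cols x" "j \<in> path_cols a y" "a \<le> depth y"
  shows "j \<in> path_cols (depth x) x"
proof -
  have "col_support (anchor (root x)) = {root x}" using root_props col_support_anchor assms by blast
  then have "j \<noteq> anchor (root x)" using path_col_not_single[OF assms(2,5,4)] by metis
  then show ?thesis using assms(3) by (auto simp: root_cols_def)
qed

lemma shared_root_col_common_ancestor:
  assumes "shallow x" "shallow y" "e0 \<in> root_cols x" "e0 \<in> root_cols y"
  shows "\<exists>i\<le>depth x. \<exists>i'\<le>depth y. ancestor i x = ancestor i' y"
proof (cases "e0 = anchor (root x)")
  case True
  have cx: "col_support e0 = {root x}" using True root_props col_support_anchor assms(1) by blast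
  show ?thesis
  proof (cases "e0 = anchor (root y)")
    case True
    have "col_support e0 = {root y}" using True root_props col_support_anchor assms(2) by blast
    then have "root x = root y" using cx by simp
    then show ?thesis unfolding root_def by blast
  next
    case False
    then have "e0 \<in> path_cols (depth y) y" using assms(4) by (auto simp: root_cols_def)
    then show ?thesis using path_col_not_single[OF assms(2) le_refl] cx by metis
  qed
next
  case False
  then have ex: "e0 \<in> path_cols (depth x) x" using assms(3) by (auto simp: root_cols_def)
  then have "e0 \<in> path_cols (depth y) y" using root_col_in_path_cols[OF assms(2,1,4) ex le_refl] by simp
  then show ?thesis using common_path_col_ancestor[OF assms(1,2) le_refl le_refl ex] by (meson less_imp_le)
qed

lemma first_common_ancestor:
  assumes "shallow x" "shallow y" "e0 \<in> root_cols x" "e0 \<in> root_cols y"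
  obtains i0 i' where "i0 \<le> depth x" "i' \<le> depth y" "ancestor i0 x = ancestor i' y"
    "path_cols i0 x \<inter> path_cols i' y = {}" "e0 \<notin> path_cols i0 x" "e0 \<notin> path_cols i' y"
proof -
  have common: "\<exists>i\<le>depth x. \<exists>i'\<le>depth y. ancestor i x = ancestor i' y"
    using shared_root_col_common_ancestor[OF assms] .
  define i0 where "i0 = (LEAST i. i \<le> depth x \<and> (\<exists>i'\<le>depth y. ancestor i x = ancestor i' y))"
  have i0: "i0 \<le> depth x \<and> (\<exists>i'\<le>depth y. ancestor i0 x = ancestor i' y)"
    unfolding i0_def using common by (rule LeastI_ex)
  then obtain i' where i': "i' \<le> depth y" "ancestor i0 x = ancestor i' y" by blast
  have mini: "p \<le> depth x \<Longrightarrow> q \<le> depth y \<Longrightarrow> ancestor p x = ancestor q y \<Longrightarrow> i0 \<le> p" for p q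
    unfolding i0_def by (rule Least_le) blast
  define z where "z = ancestor i0 x"
  have z: "shallow z" "depth z = depth x - i0" using ancestor_props assms(1) i0 by (auto simp: z_def)
  have z2: "depth z = depth y - i'" using ancestor_props[OF assms(2) i'(1)] i'(2) by (simp add: z_def)
  have disj: "path_cols i0 x \<inter> path_cols i' y = {}"
  proof (rule ccontr)
    assume "path_cols i0 x \<inter> path_cols i' y \<noteq> {}"
    then obtain j where "j \<in> path_cols i0 x" "j \<in> path_cols i' y" by blast
    then obtain p q where "p < i0" "q < i'" "ancestor p x = ancestor q y"
      using common_path_col_ancestor[OF assms(1,2) _ i'(1)] i0 by blast
    then show False using mini[of p q] i0 i' by linarith
  qed
  have n1: "e0 \<notin> path_cols i0 x"
  proof
    assume a: "e0 \<in> path_cols i0 x"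
    have "e0 \<in> path_cols (depth y) y" using root_col_in_path_cols[OF assms(2,1,4) a] i0 by simp
    then obtain p q where "p < i0" "q < depth y" "ancestor p x = ancestor q y"
      using common_path_col_ancestor[OF assms(1,2) _ le_refl a] i0 by blast
    then show False using mini[of p q] i0 by linarith
  qed
  have n2: "e0 \<notin> path_cols i' y"
  proof
    assume a: "e0 \<in> path_cols i' y"
    have "e0 \<in> path_cols (depth x) x" using root_col_in_path_cols[OF assms(1,2,3) a i'(1)] .
    then obtain p q where pq: "p < depth x" "q < i'" "ancestor p x = ancestor q y"
      using common_path_col_ancestor[OF assms(1,2) le_refl i'(1) _ a] by blast
    have l1: "depth (ancestor p x) = depth x - p" using ancestor_props[OF assms(1)] pq(1) by simp
    have l2: "depth (ancestor q y) = depth y - q" using ancestor_props[OF assms(2)] pq(2) i'(1) by simp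
    have "depth x - p = depth y - q" using l1 l2 pq(3) by simp
    then have "p < i0" using pq z z2 i'(1) i0 by linarith
    then show False using mini[of p q] pq i'(1) by linarith
  qed
  show thesis using that i0 i' disj n1 n2 by blast
qed

text \<open>The combination isolating \<open>e0\<close> is nonzero where the two root paths meet; subtracting a
  multiple of it from a combination isolating a column of the cycle through \<open>b\<close> gives one that
  vanishes there, which \<open>no_isolation_cycle\<close> rules out.\<close>

lemma no_isolation_shared:
  assumes "shallow x" "shallow y" "edge b x y" "b \<notin> root_cols x" "b \<notin> root_cols y" "e0 \<in> root_cols x" "e0 \<in> root_cols y"
    "row_comb \<mu> e0 \<noteq> 0" "\<forall>j\<in>(root_cols x \<union> root_cols y \<union> {b}) - {e0}. row_comb \<mu> j = 0" "depth x + depth y + 1 \<le> t"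
  shows False
proof -
  obtain i0 i' where i0: "i0 \<le> depth x" and i': "i' \<le> depth y" "ancestor i0 x = ancestor i' y"
    and disj: "path_cols i0 x \<inter> path_cols i' y = {}" and n1: "e0 \<notin> path_cols i0 x" and n2: "e0 \<notin> path_cols i' y"
    using first_common_ancestor[OF assms(1,2,6,7)] .
  define z where "z = ancestor i0 x"
  have z: "shallow z" using ancestor_props assms(1) i0 by (auto simp: z_def)
  have Px: "root_cols x = path_cols i0 x \<union> root_cols z" using root_cols_split[OF assms(1)] i0 by (simp add: z_def)
  have Py: "root_cols y = path_cols i' y \<union> root_cols z" using root_cols_split[OF assms(2) i'(1)] i'(2) by (simp add: z_def)
  have e0z: "e0 \<in> root_cols z" using assms(6) Px n1 by auto
  have muz: "\<mu> z \<noteq> 0"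
  proof
    assume "\<mu> z = 0"
    then have "row_comb \<mu> e0 = 0" using root_col_forced[OF z(1) _ e0z] assms(9) Px by auto
    then show False using assms(8) by simp
  qed
  define S where "S = path_cols i0 x \<union> path_cols i' y \<union> {b}"
  have cS: "card S \<le> t"
  proof -
    have "card S \<le> card (path_cols i0 x) + card (path_cols i' y) + card {b}"
      unfolding S_def by (meson add_le_mono card_Un_le le_refl order_trans)
    then show ?thesis using card_path_cols[of i0 x] card_path_cols[of i' y] i0 i'(1) assms(10) by simp
  qed
  obtain \<mu>2 e1 where e1: "e1 \<in> S" "row_comb \<mu>2 e1 \<noteq> 0" "\<forall>j\<in>S - {e1}. row_comb \<mu>2 j = 0"
    using exists_isolating_comb[OF _ cS] by (auto simp: S_def)
  define \<nu> where "\<nu> = (\<lambda>h. \<mu>2 h - (\<mu>2 z / \<mu> z) * \<mu> h)"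
  have nz: "\<nu> z = 0" using muz by (simp add: \<nu>_def)
  have bS: "b \<noteq> e0" using assms(4,6) by auto
  have z0: "j \<in> S \<Longrightarrow> row_comb \<mu> j = 0" for j
    using assms(9) n1 n2 bS Px Py by (auto simp: S_def)
  have same: "j \<in> S \<Longrightarrow> row_comb \<nu> j = row_comb \<mu>2 j" for j
    using z0 unfolding \<nu>_def row_comb_diff by simp
  show False
  proof (rule no_isolation_cycle[of x y b i0 i' z \<nu> e1])
    show "b \<notin> path_cols i0 x" using assms(4) Px by auto
    show "b \<notin> path_cols i' y" using assms(5) Py by auto
    show "e1 \<in> path_cols i0 x \<union> path_cols i' y \<union> {b}" using e1 by (simp add: S_def)
    show "row_comb \<nu> e1 \<noteq> 0" using e1 same by simp
    show "\<forall>j\<in>path_cols i0 x \<union> path_cols i' y \<union> {b} - {e1}. row_comb \<nu> j = 0" using e1 same by (auto simp: S_def)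
  qed (use assms(1,2,3) i0 i' disj nz in \<open>auto simp: z_def\<close>)
qed

text \<open>Isolate a column among the root columns of \<open>x\<close> and \<open>y\<close> and \<open>b\<close>: wherever it lies, the
  zeros of the isolating combination, propagated along the root paths, force it to vanish there.\<close>

lemma non_tree_edge_long:
  assumes "shallow x" "shallow y" "edge b x y" "1 \<le> depth x \<Longrightarrow> b \<noteq> parent_edge x" "1 \<le> depth y \<Longrightarrow> b \<noteq> parent_edge y"
  shows "t < depth x + depth y + 3"
proof (rule ccontr)
  assume "\<not> t < depth x + depth y + 3"
  then have tle: "depth x + depth y + 3 \<le> t" by simp
  have bx: "b \<notin> root_cols x" using edge_notin_root_cols[OF assms(1,3)] assms by blast
  have by': "b \<notin> root_cols y" using edge_notin_root_cols[OF assms(2) edge_sym[OF assms(3)]] assms by blast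
  define E where "E = root_cols x \<union> root_cols y \<union> {b}"
  have cE: "card E \<le> t"
  proof -
    have "card E \<le> card (root_cols x) + card (root_cols y) + card {b}"
      unfolding E_def by (meson add_le_mono card_Un_le le_refl order_trans)
    then show ?thesis using card_root_cols[of x] card_root_cols[of y] tle by simp
  qed
  obtain \<mu> e0 where e0: "e0 \<in> E" "row_comb \<mu> e0 \<noteq> 0" "\<forall>j\<in>E - {e0}. row_comb \<mu> j = 0"
    using exists_isolating_comb[OF _ cE] by (auto simp: E_def)
  consider "e0 = b" | "e0 \<in> root_cols x" "e0 \<notin> root_cols y" | "e0 \<in> root_cols y" "e0 \<notin> root_cols x" | "e0 \<in> root_cols x" "e0 \<in> root_cols y"
    using e0(1) by (auto simp: E_def)
  then show False
  proof cases
    case 1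
    have "\<mu> x = 0" using vanish_of_root_cols[OF assms(1)] e0 bx 1 by (auto simp: E_def)
    moreover have "\<mu> y = 0" using vanish_of_root_cols[OF assms(2)] e0 by' 1 by (auto simp: E_def)
    ultimately have "row_comb \<mu> b = 0" using assms(3) by (intro row_comb_eq_0) (auto simp: edge_def)
    then show False using 1 e0 by simp
  next
    case 2
    show False by (rule no_isolation_one_side[OF assms(1,2,3) bx 2 e0(2)]) (use e0 in \<open>auto simp: E_def\<close>)
  next
    case 3
    show False by (rule no_isolation_one_side[OF assms(2,1) edge_sym[OF assms(3)] by' 3 e0(2)]) (use e0 in \<open>auto simp: E_def\<close>)
  next
    case 4
    show False by (rule no_isolation_shared[OF assms(1,2,3) bx by' 4 e0(2)]) (use e0 tle in \<open>auto simp: E_def\<close>)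
  qed
qed

subsection \<open>Discharging\<close>

text \<open>The weights are tuned so that the bounds \<open>beta_add_alpha_Suc\<close>, \<open>beta_last_even\<close> and
  \<open>beta_last_odd\<close> on the share of a shallow row hold with equality.\<close>

definition geo :: "nat \<Rightarrow> real" where "geo i = (\<Sum>q<i. real r ^ q)"
definition denom :: real where "denom = (if t = 2 * s + 2 then 2 * geo (s+1) else 2 * geo (s+1) - 1)"
definition alpha :: "nat \<Rightarrow> real" where "alpha i = real r ^ (s+1-i) * geo i / denom"
definition beta :: "nat \<Rightarrow> real" where "beta i = 1 - alpha i"
definition row_cap :: real where "row_cap = 1 + real r ^ (s+1) / denom"

lemma geo_Suc: "geo (Suc i) = geo i + real r ^ i" by (simp add: geo_def)
lemma geo_nonneg: "0 \<le> geo i" by (simp add: geo_def sum_nonneg)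
lemma geo_closed_form: "(real r - 1) * geo i = real r ^ i - 1"
  by (induction i) (auto simp: geo_Suc algebra_simps geo_def[of 0])
lemma geo_ge_last: "1 \<le> i \<Longrightarrow> real r ^ (i-1) \<le> geo i"
  using geo_Suc[of "i-1"] geo_nonneg[of "i-1"] by simp
lemma geo_ge_1: "1 \<le> geo (s+1)"
proof -
  have "1 \<le> real r ^ s" using r_ge_3 by (intro one_le_power) simp
  then show ?thesis using geo_Suc[of s] geo_nonneg[of s] by simp
qed
lemma denom_ge_1: "1 \<le> denom" using geo_ge_1 by (simp add: denom_def)
lemma denom_pos: "0 < denom" using denom_ge_1 by simp

lemma geo_Suc_eq_sum: "geo (Suc m) = (\<Sum>i=0..m. real r ^ i)"
  by (simp add: geo_def atLeast0AtMost lessThan_Suc_atMost)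

lemma denom_even: "t = 2 * s + 2 \<Longrightarrow> denom = 2 * (\<Sum>i=0..s. real r ^ i)"
  unfolding denom_def by (simp add: geo_Suc_eq_sum)

lemma denom_odd: "t \<noteq> 2 * s + 2 \<Longrightarrow> denom = 2 * (\<Sum>i=1..s. real r ^ i) + 1"
  unfolding denom_def using sum.atLeast_Suc_atMost[of 0 s "\<lambda>i. real r ^ i"]
  by (simp add: geo_Suc_eq_sum)

lemma alpha_0: "alpha 0 = 0" by (simp add: alpha_def geo_def)
lemma beta_0: "beta 0 = 1" by (simp add: beta_def alpha_0)
lemma alpha_nonneg: "0 \<le> alpha i" using geo_nonneg denom_pos by (simp add: alpha_def)

lemma beta_add_alpha_Suc: assumes "i < s" shows "beta i + real r * alpha (i+1) = row_cap"
proof -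
  have e1: "real r ^ (s+1-i) = real r * real r ^ (s-i)" using assms by (simp add: Suc_diff_le)
  have e2: "real r ^ (s + 1 - (i+1)) = real r ^ (s-i)" by simp
  have e3: "real r ^ (s-i) * real r ^ i = real r ^ s" using assms by (simp flip: power_add)
  have "beta i + real r * alpha (i+1) = 1 + (real r * (real r ^ (s-i) * real r ^ i)) / denom"
    unfolding beta_def alpha_def e1 e2 geo_Suc[of i, unfolded Suc_eq_plus1] using denom_pos
    by (simp add: field_simps)
  also have "\<dots> = row_cap" unfolding e3 row_cap_def by simp
  finally show ?thesis .
qed

lemma beta_last_even: assumes "t = 2 * s + 2" shows "beta s + real r / 2 = row_cap"
proof -
  have denom: "denom = 2 * (geo s + real r ^ s)" unfolding denom_def using assms geo_Suc[of s] by simp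
  have Dp: "geo s + real r ^ s > 0" using denom denom_pos by simp
  have "beta s + real r / 2 = 1 + (real r * real r ^ s) / denom"
    unfolding beta_def alpha_def denom using Dp by (simp add: field_simps)
  then show ?thesis by (simp add: row_cap_def)
qed

lemma beta_last_odd: assumes "t \<noteq> 2 * s + 2" shows "(real r + 1) * beta s = row_cap"
proof -
  have denom: "denom = 2 * geo s + 2 * real r ^ s - 1" unfolding denom_def using assms geo_Suc[of s] by simp
  have g: "real r * geo s = geo s + real r ^ s - 1" using geo_closed_form[of s] by (simp add: algebra_simps)
  have Dp: "denom > 0" by (rule denom_pos)
  have "(real r + 1) * (denom - real r * geo s) = denom + real r * real r ^ s"
    unfolding denom using g by (simp add: algebra_simps)
  then have "(real r + 1) * beta s = (denom + real r * real r ^ s) / denom"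
    unfolding beta_def alpha_def using Dp by (simp add: field_simps)
  also have "\<dots> = row_cap" unfolding row_cap_def using Dp by (simp add: field_simps)
  finally show ?thesis .
qed

lemma alpha_ge_third: assumes "1 \<le> i" "i \<le> s" shows "1/3 \<le> alpha i"
proof -
  have r3': "3 \<le> real r" using r_ge_3 by simp
  have "real r ^ (s+1-i) * real r ^ (i-1) = real r ^ s" using assms by (simp flip: power_add)
  moreover have "real r ^ (s+1-i) * real r ^ (i-1) \<le> real r ^ (s+1-i) * geo i"
    using geo_ge_last[OF assms(1)] by (intro mult_left_mono) auto
  ultimately have n: "real r ^ s \<le> real r ^ (s+1-i) * geo i" by simp
  have "(real r - 1) * geo s = real r ^ s - 1" by (rule geo_closed_form)
  moreover have "2 * geo s \<le> (real r - 1) * geo s" using geo_nonneg[of s] r3' by (intro mult_right_mono) auto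
  ultimately have "2 * geo s \<le> real r ^ s" by simp
  then have "denom \<le> 3 * real r ^ s" using geo_Suc[of s] by (simp add: denom_def)
  then have "denom \<le> 3 * (real r ^ (s+1-i) * geo i)" using n by simp
  then show ?thesis unfolding alpha_def using denom_pos by (simp add: field_simps)
qed

lemma beta_last_ge_half: "1/2 \<le> beta s"
proof -
  have g: "real r * geo s = geo (s+1) - 1" using geo_closed_form[of s] geo_Suc[of s] by (simp add: algebra_simps)
  have "2 * (real r * geo s) \<le> denom" unfolding g using geo_ge_1 by (simp add: denom_def)
  then have "alpha s \<le> 1/2" unfolding alpha_def using denom_pos by (simp add: field_simps)
  then show ?thesis by (simp add: beta_def)
qed

lemma row_cap_ge: "(real r + 1) / 2 \<le> row_cap"
proof (cases "t = 2 * s + 2")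
  case True then show ?thesis using beta_last_even[OF True] beta_last_ge_half by (simp add: add_divide_distrib)
next
  case False
  have "(real r + 1) * (1/2) \<le> (real r + 1) * beta s" using beta_last_ge_half by (intro mult_left_mono) auto
  then show ?thesis using beta_last_odd[OF False] by simp
qed

lemma anchor_unique: assumes "2 \<le> t" "col_support j = {h}" "col_support j' = {h}" shows "j = j'"
proof (rule ccontr)
  assume ne: "j \<noteq> j'"
  have "card {j, j'} \<le> t" using ne assms(1) by simp
  then obtain \<mu> e where e: "e \<in> {j, j'}" "row_comb \<mu> e \<noteq> 0" "\<forall>x\<in>{j,j'} - {e}. row_comb \<mu> x = 0"
    using exists_isolating_comb[of "{j, j'}"] by blast
  have "row_comb \<mu> j = 0 \<longleftrightarrow> row_comb \<mu> j' = 0" using row_comb_single[OF assms(2)] row_comb_single[OF assms(3)] by simp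
  then show False using e ne by auto
qed

lemma col_support_nonempty: "col_support j \<noteq> {}"
proof
  assume a: "col_support j = {}"
  have "card {j} \<le> t" using t_ge_1 by simp
  then obtain \<mu> e where "e \<in> {j}" "row_comb \<mu> e \<noteq> 0" using exists_isolating_comb[of "{j}"] by blast
  then show False using a by (simp add: row_comb_col_support)
qed

definition share :: "'c \<Rightarrow> 'r \<Rightarrow> real" where
 "share j h = (if card (col_support j) = 1 then 1 else if card (col_support j) = 2 then
     (if (\<exists>y\<in>col_support j. y \<noteq> h \<and> shallow h \<and> shallow y \<and> depth y = depth h + 1) then alpha (depth h + 1)
      else if (\<exists>y\<in>col_support j. y \<noteq> h \<and> shallow h \<and> shallow y \<and> depth h = depth y + 1) then beta (depth h) else 1/2)
   else 1 / real (card (col_support j)))"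

lemma share_single: "col_support j = {h} \<Longrightarrow> share j h = 1" by (simp add: share_def)
lemma share_wide: "3 \<le> card (col_support j) \<Longrightarrow> share j h \<le> 1/3" by (simp add: share_def field_simps)
lemma share_edge: "edge j h y \<Longrightarrow> share j h = (if shallow h \<and> shallow y \<and> depth y = depth h + 1 then alpha (depth h + 1)
   else if shallow h \<and> shallow y \<and> depth h = depth y + 1 then beta (depth h) else 1/2)"
  by (auto simp: share_def edge_def)

lemma col_support_cases: assumes "h \<in> col_support j" shows "col_support j = {h} \<or> (\<exists>y. edge j h y) \<or> 3 \<le> card (col_support j)"
proof -
  have "card (col_support j) \<ge> 1" using assms finite_col_support by (metis One_nat_def Suc_leI card_gt_0_iff empty_iff)
  then consider "card (col_support j) = 1" | "card (col_support j) = 2" | "3 \<le> card (col_support j)" by linarith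
  then show ?thesis
  proof cases
    case 1 then show ?thesis using assms by (auto simp: card_1_singleton_iff)
  next
    case 2 then obtain a b where "col_support j = {a, b}" "a \<noteq> b" by (auto simp: card_2_iff)
    then show ?thesis using assms by (auto simp: edge_def insert_commute)
  qed simp
qed

lemma sum_share_col: "(\<Sum>h\<in>col_support j. share j h) = 1"
proof -
  obtain h where h: "h \<in> col_support j" using col_support_nonempty by blast
  consider "col_support j = {h}" | y where "edge j h y" | "3 \<le> card (col_support j)" using col_support_cases[OF h] by blast
  then show ?thesis
  proof cases
    case 1 then show ?thesis by (simp add: share_single)
  next
    case 2
    then have c: "col_support j = {h, y}" "h \<noteq> y" by (auto simp: edge_def)
    have "(\<Sum>h\<in>col_support j. share j h) = share j h + share j y" using c by simp
    also have "\<dots> = 1" unfolding share_edge[OF 2] share_edge[OF edge_sym[OF 2]] by (auto simp: beta_def)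
    finally show ?thesis .
  next
    case 3
    then have "card (col_support j) \<noteq> 1" "card (col_support j) \<noteq> 2" by auto
    then have "(\<Sum>h\<in>col_support j. share j h) = real (card (col_support j)) * (1 / real (card (col_support j)))"
      by (simp add: share_def)
    then show ?thesis using 3 by simp
  qed
qed

lemma card_cols_eq_sum_shares: "real CARD('c) = (\<Sum>h\<in>H. \<Sum>j\<in>{j. A h j \<noteq> 0}. share j h)"
proof -
  have "real CARD('c) = (\<Sum>j\<in>UNIV. \<Sum>h\<in>col_support j. share j h)" by (simp add: sum_share_col)
  also have "\<dots> = (\<Sum>j\<in>UNIV. \<Sum>h\<in>H. if A h j \<noteq> 0 then share j h else 0)"
    unfolding col_support_def using finite_rows by (simp add: sum.inter_filter)
  also have "\<dots> = (\<Sum>h\<in>H. \<Sum>j\<in>UNIV. if A h j \<noteq> 0 then share j h else 0)" by (rule sum.swap)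
  also have "\<dots> = (\<Sum>h\<in>H. \<Sum>j\<in>{j. A h j \<noteq> 0}. share j h)"
    by (simp add: sum.inter_filter[symmetric])
  finally show ?thesis .
qed

definition own_col :: "'r \<Rightarrow> 'c" where "own_col h = (if depth h = 0 then anchor h else parent_edge h)"

lemma own_col_props: assumes "shallow h" shows "h \<in> col_support (own_col h) \<and> share (own_col h) h = beta (depth h)"
proof (cases "depth h = 0")
  case True
  then have "h \<in> anchored" using depth_0_anchored assms by (auto simp: shallow_def)
  then have "col_support (anchor h) = {h}" by (rule col_support_anchor)
  then show ?thesis using True by (simp add: own_col_def share_single beta_0)
next
  case False
  then have p: "shallow (parent h)" "depth (parent h) = depth h - 1" "edge (parent_edge h) h (parent h)" using parent_props assms by auto
  have "share (parent_edge h) h = beta (depth h)" unfolding share_edge[OF p(3)] using p False assms by auto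
  then show ?thesis using False p(3) by (simp add: own_col_def edge_def)
qed

lemma edge_ne_parent_edge: "edge j h y \<Longrightarrow> shallow y \<Longrightarrow> 1 \<le> depth y \<Longrightarrow> depth y \<noteq> depth h + 1 \<Longrightarrow> j \<noteq> parent_edge y"
proof
  assume a: "edge j h y" "shallow y" "1 \<le> depth y" "depth y \<noteq> depth h + 1" "j = parent_edge y"
  have p: "depth (parent y) = depth y - 1" "edge (parent_edge y) y (parent y)" using parent_props a by auto
  then have "{h, y} = {y, parent y}" using a by (auto simp: edge_def)
  then have "parent y = h" using a(1) by (auto simp: edge_def doubleton_eq_iff)
  then show False using p a by simp
qed

lemma row_support_iff: "h \<in> H \<Longrightarrow> j \<in> {j. A h j \<noteq> 0} \<longleftrightarrow> h \<in> col_support j" by (simp add: col_support_def)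

lemma shallow_edge: assumes "shallow h" "depth h < s" "edge j h y" shows "shallow y \<and> depth y \<le> depth h + 1 \<and> depth h \<le> depth y + 1"
proof -
  have "reach (depth h) h" using assms reach_depth by (auto simp: shallow_def)
  then have r: "reach (Suc (depth h)) y" using reach_edge[OF edge_sym[OF assms(3)]] by blast
  then have "shallow y" unfolding shallow_def using reach_mono[OF r] assms(2) by simp
  moreover have "depth y \<le> depth h + 1" using reach_depth[OF r] by simp
  moreover have "depth h \<le> depth y + 1" using depth_edge_le[OF assms(3)] \<open>shallow y\<close> by (auto simp: shallow_def)
  ultimately show ?thesis by simp
qed

lemma row_shares_le_inner: assumes "h \<in> H" "shallow h" "depth h < s" shows "(\<Sum>j\<in>{j. A h j \<noteq> 0}. share j h) \<le> row_cap"
proof -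
  let ?i = "depth h"
  have own_col: "h \<in> col_support (own_col h)" "share (own_col h) h = beta ?i" using own_col_props assms by auto
  have oth: "share j h \<le> alpha (?i + 1)" if j: "h \<in> col_support j" "j \<noteq> own_col h" for j
  proof -
    consider "col_support j = {h}" | y where "edge j h y" | "3 \<le> card (col_support j)" using col_support_cases[OF j(1)] by blast
    then show ?thesis
    proof cases
      case 1
      then have "h \<in> anchored" by (auto simp: anchored_def)
      then have "?i = 0" using anchored_depth by blast
      then have "own_col h = anchor h" by (simp add: own_col_def)
      moreover have "j = anchor h" using anchor_unique 1 col_support_anchor[OF \<open>h \<in> anchored\<close>] t_lower assms(3) by simp
      ultimately show ?thesis using j by simp
    next
      case 2
      have y: "shallow y" "depth y \<le> ?i + 1" "?i \<le> depth y + 1" using shallow_edge[OF assms(2,3) 2] by auto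
      show ?thesis
      proof (cases "depth y = ?i + 1")
        case True then show ?thesis unfolding share_edge[OF 2] using y assms by simp
      next
        case False
        have "t < ?i + depth y + 3"
        proof (rule non_tree_edge_long[OF assms(2) y(1) 2])
          show "1 \<le> ?i \<Longrightarrow> j \<noteq> parent_edge h" using j by (simp add: own_col_def)
          show "1 \<le> depth y \<Longrightarrow> j \<noteq> parent_edge y" using edge_ne_parent_edge[OF 2 y(1) _ False] by simp
        qed
        then show ?thesis using False y assms t_lower by linarith
      qed
    next
      case 3
      have "share j h \<le> 1/3" using 3 by (rule share_wide)
      moreover have "1/3 \<le> alpha (?i + 1)" using assms(3) by (intro alpha_ge_third) auto
      ultimately show ?thesis by linarith
    qed
  qed
  have "(\<Sum>j\<in>{j. A h j \<noteq> 0}. share j h) \<le> beta ?i + real r * alpha (?i + 1)"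
    by (rule sum_le_one_plus_card_mult) (use own_col oth row_weight[OF assms(1)] row_support_iff[OF assms(1)] alpha_nonneg in auto)
  also have "\<dots> = row_cap" using beta_add_alpha_Suc assms by simp
  finally show ?thesis .
qed

lemma row_shares_le_last_even: assumes "h \<in> H" "shallow h" "depth h = s" "t = 2 * s + 2" shows "(\<Sum>j\<in>{j. A h j \<noteq> 0}. share j h) \<le> row_cap"
proof -
  have own_col: "h \<in> col_support (own_col h)" "share (own_col h) h = beta s" using own_col_props assms by auto
  have oth: "share j h \<le> 1/2" if j: "h \<in> col_support j" "j \<noteq> own_col h" for j
  proof -
    consider "col_support j = {h}" | y where "edge j h y" | "3 \<le> card (col_support j)" using col_support_cases[OF j(1)] by blast
    then show ?thesis
    proof cases
      case 1
      then have "h \<in> anchored" by (auto simp: anchored_def)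
      then have "depth h = 0" using anchored_depth by blast
      then have "own_col h = anchor h" by (simp add: own_col_def)
      moreover have "j = anchor h" using anchor_unique 1 col_support_anchor[OF \<open>h \<in> anchored\<close>] assms(4) by simp
      ultimately show ?thesis using j by simp
    next
      case 2
      have ly: "shallow y \<Longrightarrow> depth y \<le> s" using reach_depth by (auto simp: shallow_def)
      show ?thesis
      proof (cases "shallow y \<and> s = depth y + 1")
        case True
        have "t < depth h + depth y + 3"
        proof (rule non_tree_edge_long[OF assms(2) _ 2])
          show "shallow y" using True by blast
          show "1 \<le> depth h \<Longrightarrow> j \<noteq> parent_edge h" using j by (simp add: own_col_def)
          have "depth y \<noteq> depth h + 1" using True assms(3) by linarith
          then show "1 \<le> depth y \<Longrightarrow> j \<noteq> parent_edge y" using edge_ne_parent_edge[OF 2] True by blast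
        qed
        then show ?thesis using True assms by linarith
      next
        case False
        then show ?thesis unfolding share_edge[OF 2] using ly assms by auto
      qed
    next
      case 3
      then show ?thesis using share_wide[of j h] by simp
    qed
  qed
  have "(\<Sum>j\<in>{j. A h j \<noteq> 0}. share j h) \<le> beta s + real r * (1/2)"
    by (rule sum_le_one_plus_card_mult) (use own_col oth row_weight[OF assms(1)] row_support_iff[OF assms(1)] in auto)
  also have "\<dots> = row_cap" using beta_last_even assms by simp
  finally show ?thesis .
qed

lemma row_shares_le_last_odd: assumes "h \<in> H" "shallow h" "depth h = s" "t \<noteq> 2 * s + 2" shows "(\<Sum>j\<in>{j. A h j \<noteq> 0}. share j h) \<le> row_cap"
proof -
  have all: "share j h \<le> beta s" if j: "h \<in> col_support j" for j
  proof -
    consider "col_support j = {h}" | y where "edge j h y" | "3 \<le> card (col_support j)" using col_support_cases[OF j(1)] by blast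
    then show ?thesis
    proof cases
      case 1
      then have "h \<in> anchored" by (auto simp: anchored_def)
      then have "depth h = 0" using anchored_depth by blast
      then have "beta s = 1" by (metis assms(3) beta_0)
      then show ?thesis using share_single[OF 1] by simp
    next
      case 2
      have ly: "shallow y \<Longrightarrow> depth y \<le> s" using reach_depth by (auto simp: shallow_def)
      show ?thesis unfolding share_edge[OF 2] using ly assms beta_last_ge_half by auto
    next
      case 3
      then show ?thesis using share_wide[of j h] beta_last_ge_half by simp
    qed
  qed
  have "(\<Sum>j\<in>{j. A h j \<noteq> 0}. share j h) \<le> real (r + 1) * beta s"
    by (rule sum_le_card_mult) (use all row_weight[OF assms(1)] row_support_iff[OF assms(1)] beta_last_ge_half in auto)
  also have "\<dots> = row_cap" using beta_last_odd[OF assms(4)] by (simp add: add.commute)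
  finally show ?thesis .
qed

lemma row_shares_le_deep: assumes "h \<in> H" "\<not> shallow h" shows "(\<Sum>j\<in>{j. A h j \<noteq> 0}. share j h) \<le> row_cap"
proof -
  have all: "share j h \<le> 1/2" if j: "h \<in> col_support j" for j
  proof -
    consider "col_support j = {h}" | y where "edge j h y" | "3 \<le> card (col_support j)" using col_support_cases[OF j(1)] by blast
    then show ?thesis
    proof cases
      case 1
      then have "h \<in> anchored" by (auto simp: anchored_def)
      then have "shallow h" unfolding shallow_def using anchored_depth[OF \<open>h \<in> anchored\<close>] reach_mono[of 0 h s] by simp
      then show ?thesis using assms by simp
    next
      case 2
      show ?thesis unfolding share_edge[OF 2] using assms by auto
    next
      case 3
      then show ?thesis using share_wide[of j h] by simp
    qed
  qed
  have "(\<Sum>j\<in>{j. A h j \<noteq> 0}. share j h) \<le> real (r + 1) * (1/2)"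
    by (rule sum_le_card_mult) (use all row_weight[OF assms(1)] row_support_iff[OF assms(1)] in auto)
  also have "\<dots> \<le> row_cap" using row_cap_ge by simp
  finally show ?thesis .
qed

lemma row_shares_le: assumes "h \<in> H" shows "(\<Sum>j\<in>{j. A h j \<noteq> 0}. share j h) \<le> row_cap"
proof (cases "shallow h")
  case True
  have "depth h \<le> s" using True reach_depth by (auto simp: shallow_def)
  then consider "depth h < s" | "depth h = s" by linarith
  then show ?thesis
  proof cases
    case 1 then show ?thesis using row_shares_le_inner assms True by blast
  next
    case 2 then show ?thesis using row_shares_le_last_even row_shares_le_last_odd assms True by blast
  qed
next
  case False then show ?thesis using row_shares_le_deep assms by blast
qed

lemma card_cols_le: "real CARD('c) \<le> real (card H) * row_cap"
proof -
  have "real CARD('c) = (\<Sum>h\<in>H. \<Sum>j\<in>{j. A h j \<noteq> 0}. share j h)" by (rule card_cols_eq_sum_shares)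
  also have "\<dots> \<le> (\<Sum>h\<in>H. row_cap)" by (intro sum_mono row_shares_le)
  also have "\<dots> = real (card H) * row_cap" by simp
  finally show ?thesis .
qed

lemma rate_le:
  assumes "card H + k \<le> CARD('c)"
  shows "real k / real CARD('c) \<le> real r ^ (s + 1) / (real r ^ (s + 1) + denom)"
  using rate_le_of_cover[OF denom_pos _ _ card_cols_le[unfolded row_cap_def]] assms by simp

end

section \<open>Sequentially recoverable codes\<close>

definition local_checks :: "('a::field ^ 'n) set \<Rightarrow> nat \<Rightarrow> ('a ^ 'n) set" where
  "local_checks C r = {w. (\<forall>c\<in>C. dot w c = 0) \<and> card {j. w $ j \<noteq> 0} \<le> r + 1}"

lemma dim_add_card_local_checks_le:
  fixes C :: "('a::field ^ 'n) set"
  assumes "B \<subseteq> local_checks C r" "vec.independent B"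
  shows "vec.dim C + card B \<le> CARD('n)"
proof -
  have "C \<subseteq> annihilator B" using assms(1) by (auto simp: annihilator_def local_checks_def)
  then have "vec.dim C \<le> vec.dim (annihilator B)" by (rule vec.dim_subset)
  then show ?thesis using dim_annihilator_add_card_le[OF assms(2)] by linarith
qed

text \<open>Only the first step of the recovery order is needed: its coordinate is a combination of
  at most \<open>r\<close> coordinates outside \<open>E\<close>, which is a check of weight at most \<open>r + 1\<close>
  meeting \<open>E\<close> in a single position.\<close>

lemma seq_recoverable_isolating_check:
  fixes C :: "('a::field ^ 'n) set"
  assumes "seq_recoverable C r t" "E \<noteq> {}" "card E \<le> t"
  obtains w where "w \<in> local_checks C r" "card {j\<in>E. w $ j \<noteq> 0} = 1"
proof -
  obtain l where l: "distinct l" "set l = E" and rec: "\<forall>j<length l. \<exists>(R::'n set) (a::'n \<Rightarrow> 'a).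
      card R \<le> r \<and> R \<inter> set (drop j l) = {} \<and> (\<forall>c\<in>C. c $ (l ! j) = (\<Sum>i\<in>R. a i * c $ i))"
    using assms unfolding seq_recoverable_def by blast
  have "0 < length l" using l assms(2) by (cases l) auto
  then obtain R a where Ra: "card R \<le> r" "R \<inter> E = {}" "\<forall>c\<in>C. c $ (l ! 0) = (\<Sum>i\<in>R. a i * c $ i)"
    using rec l(2) by fastforce
  define l0 where "l0 = l ! 0"
  have l0E: "l0 \<in> E" using l \<open>0 < length l\<close> by (auto simp: l0_def)
  define v where "v = (\<chi> i. if i \<in> R then a i else (0::'a))"
  define w where "w = axis l0 1 - v"
  have w_nth: "w $ i = (if i = l0 then 1 else 0) - (if i \<in> R then a i else 0)" for i
    by (simp add: w_def v_def axis_def)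
  have dot_v: "dot v c = (\<Sum>i\<in>R. a i * c $ i)" for c
  proof -
    have "dot v c = (\<Sum>i\<in>UNIV. if i \<in> R then a i * c $ i else 0)"
      unfolding dot_def v_def by (intro sum.cong) auto
    then show ?thesis by (simp add: sum.If_cases)
  qed
  have "dot w c = 0" if "c \<in> C" for c
  proof -
    have "dot w c = dot (axis l0 1) c - dot v c"
      unfolding w_def by (simp add: dot_def algebra_simps sum_subtractf)
    then show ?thesis using Ra(3) that dot_v by (simp add: dot_axis_left l0_def)
  qed
  moreover have "card {j. w $ j \<noteq> 0} \<le> r + 1"
  proof -
    have "{j. w $ j \<noteq> 0} \<subseteq> insert l0 R" using w_nth by auto
    then have "card {j. w $ j \<noteq> 0} \<le> card (insert l0 R)" by (intro card_mono) auto
    also have "\<dots> \<le> r + 1" using Ra(1) by (simp add: card_insert_if)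
    finally show ?thesis .
  qed
  moreover have "{j\<in>E. w $ j \<noteq> 0} = {l0}"
    using w_nth Ra(2) l0E by auto
  ultimately show ?thesis using that[of w] by (simp add: local_checks_def)
qed

lemma isolating_checks_local_checks:
  fixes C :: "('a::{field,finite} ^ 'n) set"
  assumes "seq_recoverable C r t" "B \<subseteq> local_checks C r" "vec.independent B"
    "local_checks C r \<subseteq> vec.span B" "r \<ge> 3" "t \<ge> 1" "2 * s + 1 \<le> t" "t \<le> 2 * s + 2"
  shows "isolating_checks B (\<lambda>h j. h $ j) r t s"
proof
  have finB: "finite B" using assms(3) vec.finiteI_independent by blast
  then show "finite B" .
  show "card {j. h $ j \<noteq> 0} \<le> r + 1" if "h \<in> B" for h
    using assms(2) that by (auto simp: local_checks_def)
  show "\<exists>\<mu>. card {j\<in>E. (\<Sum>h\<in>B. \<mu> h * h $ j) \<noteq> 0} = 1" if E: "E \<noteq> {}" "card E \<le> t" for E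
  proof -
    obtain w where w: "w \<in> local_checks C r" "card {j\<in>E. w $ j \<noteq> 0} = 1"
      using seq_recoverable_isolating_check[OF assms(1) E] .
    then obtain u where "w = (\<Sum>v\<in>B. u v *s v)"
      using assms(4) vec.span_finite[OF finB] by auto
    then have "w $ j = (\<Sum>h\<in>B. u h * h $ j)" for j by simp
    then show ?thesis using w(2) by (intro exI[of _ u]) simp
  qed
qed (use assms(5-8) in auto)

theorem mainTheorem1:
  fixes C :: "('a::{field,finite} ^ 'n) set" and n k r t :: nat
  assumes "r \<ge> 3" and "t \<ge> 1" and "seq_LRC C n k r t"
  shows "let s = (t - 1) div 2 in
     (if even t
      then real k / real n \<le> real r ^ (s + 1) / (real r ^ (s + 1) + 2 * (\<Sum>i=0..s. real r ^ i))
      else real k / real n \<le> real r ^ (s + 1) / (real r ^ (s + 1) + 2 * (\<Sum>i=1..s. real r ^ i) + 1))"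
proof -
  have n: "CARD('n) = n" and k: "vec.dim C = k" and rec: "seq_recoverable C r t"
    using assms(3) by (auto simp: seq_LRC_def)
  define s where "s = (t - 1) div 2"
  have t_bounds: "2 * s + 1 \<le> t" "t \<le> 2 * s + 2" using assms(2) by (auto simp: s_def)
  obtain B where B: "B \<subseteq> local_checks C r" "vec.independent B" "local_checks C r \<subseteq> vec.span B"
    using vec.maximal_independent_subset by blast
  interpret isolating_checks B "\<lambda>h j. h $ j" r t s
    using isolating_checks_local_checks[OF rec B assms(1,2) t_bounds] .
  have "card B + k \<le> CARD('n)" using dim_add_card_local_checks_le[OF B(1,2)] k by simp
  then have rate: "real k / real n \<le> real r ^ (s + 1) / (real r ^ (s + 1) + denom)"
    using rate_le n by simp
  show ?thesis
  proof (cases "even t")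
    case True
    then have "t = 2 * s + 2" using t_bounds by presburger
    then show ?thesis using rate True denom_even unfolding Let_def s_def[symmetric] by simp
  next
    case False
    then have "t \<noteq> 2 * s + 2" by presburger
    then show ?thesis using rate False denom_odd unfolding Let_def s_def[symmetric] by (simp add: add.assoc)
  qed
qed

end
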